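(* Consider a finite reward-free MDP with occupancy polytope $\Phi$, let $d_e^\star\in\Phi$ be the occupancy measure of an optimal demonstrator, let $\delta\ge0$, and let $\mathcal D=\{(d_e^k,\epsilon^k)\}_{k=1}^K$ be a dataset with $d_e^k\in\Phi$, $\epsilon^k\ge0$ and $\mathcal R(\mathcal D)\ne\emptyset$. Suppose that for every $\tilde r\in\Delta(S\times A)$ with $\mathrm{subopt}(\tilde r,d_e^\star)>\delta$ there exist $r'\in\mathcal R(d_e^\star)$ and $k\in[K]$ such that \[ (\tilde r-r')^\top(d_e^\star-d_e^k)>0\quad\text{and}\quad\mathrm{subopt}(r',d_e^k)\in[\epsilon^k-\delta,\epsilon^k]. \] Then $\mathrm{Gap}(\mathcal R(\mathcal D),\mathcal R(d_e^\star))\le\delta$.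
   Context: The MDP has finite $S$, $A$, transitions $P$, initial distribution $\mu_0$, discount $\gamma\in(0,1)$; $(Md)(s)=\sum_a d(s,a)-\gamma\sum_{s',a'}P(s\mid s',a')d(s',a')$ and $\Phi=\{d\ge0:Md=(1-\gamma)\mu_0\}$. Rewards are $r\in\Delta(S\times A)$. $\mathrm{subopt}(r,d):=\max_{\tilde d\in\Phi}r^\top\tilde d-r^\top d$. $\mathcal R(\mathcal D):=\{r\in\Delta(S\times A):\mathrm{subopt}(r,d_e^k)\le\epsilon^k\ \forall k\}$; $\mathcal R(d_e^\star):=\{r\in\Delta(S\times A):\mathrm{subopt}(r,d_e^\star)=0\}$. $\mathrm{Gap}(\mathcal R,\mathcal R(d_e^\star)):=\max_{r\in\mathcal R}\mathrm{subopt}(r,d_e^\star)$. *)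

theory Defs
  imports "HOL-Analysis.Analysis"
begin

type_synonym ('s,'a) occ = "'s \<times> 'a \<Rightarrow> real"

text \<open>P s s' a' is the probability P(s | s', a') of moving to s from (s',a').\<close>

definition flowM :: "('s::finite \<Rightarrow> 's \<Rightarrow> 'a::finite \<Rightarrow> real) \<Rightarrow> real \<Rightarrow> ('s,'a) occ \<Rightarrow> 's \<Rightarrow> real" where
  "flowM P \<gamma> d s = (\<Sum>a\<in>UNIV. d (s,a)) - \<gamma> * (\<Sum>(s',a')\<in>UNIV. P s s' a' * d (s',a'))"

definition occPoly :: "('s::finite \<Rightarrow> 's \<Rightarrow> 'a::finite \<Rightarrow> real) \<Rightarrow> ('s \<Rightarrow> real) \<Rightarrow> real \<Rightarrow> ('s,'a) occ set" where
  "occPoly P \<mu>0 \<gamma> = {d. (\<forall>x. d x \<ge> 0) \<and> (\<forall>s. flowM P \<gamma> d s = (1 - \<gamma>) * \<mu>0 s)}"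

definition simplexSA :: "('s::finite,'a::finite) occ set" where
  "simplexSA = {r. (\<forall>x. r x \<ge> 0) \<and> (\<Sum>x\<in>UNIV. r x) = 1}"

definition inner_sa :: "('s::finite,'a::finite) occ \<Rightarrow> ('s,'a) occ \<Rightarrow> real" where
  "inner_sa r d = (\<Sum>x\<in>UNIV. r x * d x)"

definition subopt :: "('s::finite \<Rightarrow> 's \<Rightarrow> 'a::finite \<Rightarrow> real) \<Rightarrow> ('s \<Rightarrow> real) \<Rightarrow> real \<Rightarrow> ('s,'a) occ \<Rightarrow> ('s,'a) occ \<Rightarrow> real" where
  "subopt P \<mu>0 \<gamma> r d = (SUP d'\<in>occPoly P \<mu>0 \<gamma>. inner_sa r d') - inner_sa r d"

definition feasR :: "('s::finite \<Rightarrow> 's \<Rightarrow> 'a::finite \<Rightarrow> real) \<Rightarrow> ('s \<Rightarrow> real) \<Rightarrow> real \<Rightarrow> nat \<Rightarrow> (nat \<Rightarrow> ('s,'a) occ) \<Rightarrow> (nat \<Rightarrow> real) \<Rightarrow> ('s,'a) occ set" where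
  "feasR P \<mu>0 \<gamma> K dk eps = {r \<in> simplexSA. \<forall>k\<in>{1..K}. subopt P \<mu>0 \<gamma> r (dk k) \<le> eps k}"

definition optR :: "('s::finite \<Rightarrow> 's \<Rightarrow> 'a::finite \<Rightarrow> real) \<Rightarrow> ('s \<Rightarrow> real) \<Rightarrow> real \<Rightarrow> ('s,'a) occ \<Rightarrow> ('s,'a) occ set" where
  "optR P \<mu>0 \<gamma> de = {r \<in> simplexSA. subopt P \<mu>0 \<gamma> r de = 0}"

definition gap :: "('s::finite \<Rightarrow> 's \<Rightarrow> 'a::finite \<Rightarrow> real) \<Rightarrow> ('s \<Rightarrow> real) \<Rightarrow> real \<Rightarrow> ('s,'a) occ set \<Rightarrow> ('s,'a) occ \<Rightarrow> real" where
  "gap P \<mu>0 \<gamma> R de = (SUP r\<in>R. subopt P \<mu>0 \<gamma> r de)"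

end

theory Submission
  imports Defs
begin

text \<open>For a fixed reward r the supremum in subopt cancels in differences, whatever
  its value (the set of values need not even be bounded):
  subopt r e - subopt r d = r\<bullet>d - r\<bullet>e. Hence for r' optimal for d,
  (r - r')\<bullet>(d - e) = subopt r e - subopt r d - subopt r' e. If r is
  feasible for a dataset entry (e, \<epsilon>) and subopt r' e \<ge> \<epsilon> - \<delta>, positivity
  of this inner product forces subopt r d < \<delta>. So every feasible reward
  violating the bound would contradict the hypothesis.\<close>

lemma inner_sa_diff_diff:
  "inner_sa (\<lambda>x. r x - r' x) (\<lambda>x. d x - e x) =
     inner_sa r d - inner_sa r e - inner_sa r' d + inner_sa r' e"
  unfolding inner_sa_def
  by (simp add: algebra_simps sum_subtractf[symmetric] sum.distrib[symmetric])

lemma subopt_diff: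
  "subopt P \<mu>0 \<gamma> r e - subopt P \<mu>0 \<gamma> r d = inner_sa r d - inner_sa r e"
  unfolding subopt_def by simp

lemma subopt_less_if_separated_by_optimal:
  assumes opt: "subopt P \<mu>0 \<gamma> r' d = 0"
    and sep: "inner_sa (\<lambda>x. r x - r' x) (\<lambda>x. d x - e x) > 0"
    and feasible: "subopt P \<mu>0 \<gamma> r e \<le> \<epsilon>"
    and near_tight: "\<epsilon> - \<delta> \<le> subopt P \<mu>0 \<gamma> r' e"
  shows "subopt P \<mu>0 \<gamma> r d < \<delta>"
proof -
  have "inner_sa (\<lambda>x. r x - r' x) (\<lambda>x. d x - e x) =
      (subopt P \<mu>0 \<gamma> r e - subopt P \<mu>0 \<gamma> r d) - (subopt P \<mu>0 \<gamma> r' e - subopt P \<mu>0 \<gamma> r' d)"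
    by (simp only: inner_sa_diff_diff subopt_diff)
  with assms show ?thesis by linarith
qed

theorem mainTheorem3:
  fixes P :: "'s::finite \<Rightarrow> 's \<Rightarrow> 'a::finite \<Rightarrow> real"
    and \<mu>0 :: "'s \<Rightarrow> real" and \<gamma> \<delta> :: real and K :: nat
    and de :: "('s,'a) occ" and dk :: "nat \<Rightarrow> ('s,'a) occ" and eps :: "nat \<Rightarrow> real"
  assumes P_nonneg: "\<forall>s s' a'. P s s' a' \<ge> 0"
    and P_stoch: "\<forall>s' a'. (\<Sum>s\<in>UNIV. P s s' a') = 1"
    and mu_nonneg: "\<forall>s. \<mu>0 s \<ge> 0" and mu_sum: "(\<Sum>s\<in>UNIV. \<mu>0 s) = 1"
    and gamma: "0 < \<gamma>" "\<gamma> < 1"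
    and de_occ: "de \<in> occPoly P \<mu>0 \<gamma>"
    and de_opt: "\<exists>rtrue\<in>simplexSA. subopt P \<mu>0 \<gamma> rtrue de = 0"
    and delta: "\<delta> \<ge> 0"
    and dk_occ: "\<forall>k\<in>{1..K}. dk k \<in> occPoly P \<mu>0 \<gamma>"
    and eps_nonneg: "\<forall>k\<in>{1..K}. eps k \<ge> 0"
    and nonempty: "feasR P \<mu>0 \<gamma> K dk eps \<noteq> {}"
    and cond: "\<forall>rt\<in>simplexSA. subopt P \<mu>0 \<gamma> rt de > \<delta> \<longrightarrow>
        (\<exists>r'\<in>optR P \<mu>0 \<gamma> de. \<exists>k\<in>{1..K}.
           inner_sa (\<lambda>x. rt x - r' x) (\<lambda>x. de x - dk k x) > 0 \<and>
           eps k - \<delta> \<le> subopt P \<mu>0 \<gamma> r' (dk k) \<and> subopt P \<mu>0 \<gamma> r' (dk k) \<le> eps k)"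
  shows "gap P \<mu>0 \<gamma> (feasR P \<mu>0 \<gamma> K dk eps) de \<le> \<delta>"
  unfolding gap_def
proof (rule cSUP_least[OF nonempty])
  fix r assume "r \<in> feasR P \<mu>0 \<gamma> K dk eps"
  then have r_simplex: "r \<in> simplexSA"
    and r_feasible: "\<forall>k\<in>{1..K}. subopt P \<mu>0 \<gamma> r (dk k) \<le> eps k"
    unfolding feasR_def by auto
  show "subopt P \<mu>0 \<gamma> r de \<le> \<delta>"
  proof (rule ccontr)
    assume "\<not> subopt P \<mu>0 \<gamma> r de \<le> \<delta>"
    with cond r_simplex obtain r' k where "r' \<in> optR P \<mu>0 \<gamma> de" "k \<in> {1..K}"
      and "inner_sa (\<lambda>x. r x - r' x) (\<lambda>x. de x - dk k x) > 0"
      and "eps k - \<delta> \<le> subopt P \<mu>0 \<gamma> r' (dk k)"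
      by force
    with r_feasible have "subopt P \<mu>0 \<gamma> r de < \<delta>"
      by (intro subopt_less_if_separated_by_optimal[where r' = r' and e = "dk k" and \<epsilon> = "eps k"])
        (auto simp: optR_def)
    with \<open>\<not> subopt P \<mu>0 \<gamma> r de \<le> \<delta>\<close> show False by simp
  qed
qed

end
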